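(* For every $\phi\in L^1(\mathbb{R}_+)$, $f\in L^\infty(\mathbb{R}_+)$ and $\omega\in\Omega^*$, \[\omega\text{-}\lim_x\int_0^x f(t)\phi(x-t)\,dt = \int_0^\infty f_\omega(-t)\phi(t)\,dt.\]
   Context: $\mathbb{R}_+=[0,\infty)$; functions are complex-valued. Let $\beta\mathbb{N}$ be the Stone–Čech compactification of $\mathbb{N}$, $\mathbb{N}^*=\beta\mathbb{N}\setminus\mathbb{N}$, $\tau$ the continuous extension of $n\mapsto n+1$. $\Omega$ is the quotient of $\beta\mathbb{N}\times[0,1]$ identifying $(\eta,1)$ with $(\tau\eta,0)$; $\Omega^*$ consists of classes $(\eta,u)$ with $\eta\in\mathbb{N}^*$; $\tau^s(\eta,u)=(\tau^{[u+s]}\eta,u+s-[u+s])$. Each $\omega=(\eta,u)$ is identified with the ultrafilter on $\mathbb{R}_+$ generated by $\{u+A:A\in\eta\}$, and $\omega\text{-}\lim_x g(x)$ is the limit of a bounded function $g$ along this ultrafilter. For $f\in L^\infty(\mathbb{R}_+)$, $f_\omega := \omega\text{-}\lim_s f(\cdot+s)$ in the weak* topology of $L^\infty(\mathbb{R}_+)$, extended to $L^\infty(\mathbb{R})$ by $f_\omega(x) = f_{\tau^{-N}\omega}(N+x)$ for $x\in[-N,0]$, $N>0$. *)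

theory Defs
  imports "HOL-Analysis.Analysis"
begin

text \<open>Points of the Stone-Cech compactification of the naturals are ultrafilters on nat;
  N* consists of the free (non-principal) ones.\<close>

definition nat_ultrafilter :: "nat filter \<Rightarrow> bool" where
  "nat_ultrafilter F \<longleftrightarrow> F \<noteq> bot \<and> (\<forall>P. eventually P F \<or> eventually (\<lambda>n. \<not> P n) F)"

definition in_Nstar :: "nat filter \<Rightarrow> bool" where
  "in_Nstar \<eta> \<longleftrightarrow> nat_ultrafilter \<eta> \<and> (\<forall>n. \<eta> \<noteq> principal {n})"

text \<open>A point of Omega is represented by its canonical representative (eta, u) with 0 <= u < 1
  (the class of (eta,1) is represented by (tau eta, 0)).\<close>

type_synonym omega = "nat filter \<times> real"

definition Omega_star :: "omega set" where
  "Omega_star = {(\<eta>, u). in_Nstar \<eta> \<and> 0 \<le> u \<and> u < 1}"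

text \<open>Integer powers of tau on N*: the continuous extension of n |-> n + k (for k < 0 this is the
  inverse of tau^(-k) on N*, since free ultrafilters contain all cofinite sets).\<close>

definition tau_pow :: "int \<Rightarrow> nat filter \<Rightarrow> nat filter" where
  "tau_pow k \<eta> = filtermap (\<lambda>n. nat (int n + k)) \<eta>"

definition tau :: "real \<Rightarrow> omega \<Rightarrow> omega" where
  "tau s \<omega> = (tau_pow \<lfloor>snd \<omega> + s\<rfloor> (fst \<omega>), snd \<omega> + s - of_int \<lfloor>snd \<omega> + s\<rfloor>)"

definition omega_filter :: "omega \<Rightarrow> real filter" where
  "omega_filter \<omega> = filtermap (\<lambda>n. snd \<omega> + real n) (fst \<omega>)"

definition omega_lim :: "omega \<Rightarrow> (real \<Rightarrow> 'a::t2_space) \<Rightarrow> 'a" where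
  "omega_lim \<omega> g = Lim (omega_filter \<omega>) g"

definition L1_plus :: "(real \<Rightarrow> complex) \<Rightarrow> bool" where
  "L1_plus \<phi> \<longleftrightarrow> set_integrable lborel {0..} \<phi>"

definition Linf_plus :: "(real \<Rightarrow> complex) \<Rightarrow> bool" where
  "Linf_plus f \<longleftrightarrow> set_borel_measurable lborel {0..} f \<and>
     (\<exists>C. AE t in lborel. t \<in> {0..} \<longrightarrow> norm (f t) \<le> C)"

definition Linf_real :: "(real \<Rightarrow> complex) \<Rightarrow> bool" where
  "Linf_real g \<longleftrightarrow> g \<in> borel_measurable lborel \<and> (\<exists>C. AE t in lborel. norm (g t) \<le> C)"

text \<open>h represents f_omega in L^inf(R+): the weak* limit of f(. + s) along omega.\<close>

definition is_f_omega_plus :: "(real \<Rightarrow> complex) \<Rightarrow> omega \<Rightarrow> (real \<Rightarrow> complex) \<Rightarrow> bool" where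
  "is_f_omega_plus f \<omega> h \<longleftrightarrow> Linf_plus h \<and>
     (\<forall>\<phi>. L1_plus \<phi> \<longrightarrow>
        ((\<lambda>s. LINT t:{0..}|lborel. f (t + s) * \<phi> t) \<longlongrightarrow> (LINT t:{0..}|lborel. h t * \<phi> t))
          (omega_filter \<omega>))"

text \<open>g represents f_omega in L^inf(R), extended by f_omega(x) = f_(tau^(-N) omega)(N + x)
  for x in [-N, 0].\<close>

definition is_f_omega :: "(real \<Rightarrow> complex) \<Rightarrow> omega \<Rightarrow> (real \<Rightarrow> complex) \<Rightarrow> bool" where
  "is_f_omega f \<omega> g \<longleftrightarrow> Linf_real g \<and> is_f_omega_plus f \<omega> g \<and>
     (\<forall>N>0. \<exists>h. is_f_omega_plus f (tau (- N) \<omega>) h \<and>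
        (AE x in lborel. x \<in> {- N..0} \<longrightarrow> g x = h (N + x)))"

end

theory Submission
  imports Defs
begin

(* Substituting s = x - t, the convolution becomes the integral of f (x - s) * phi s over [0, x].
   Cut it off at s = M: the piece over [0, M] equals the integral over t >= 0 of
   f (t + (x - M)) * phi (M - t), so as x runs along omega, x - M runs along tau (- M) omega and
   the piece converges to the integral of f_(tau (- M) omega) t * phi (M - t) over [0, M], which
   by the defining extension of f_omega is the integral of f_omega (- s) * phi s over [0, M].
   The two pieces over s > M are bounded by a common sup-norm bound times the L1-tail of phi beyond
   M, uniformly in x, so letting M tend to infinity gives the claim. *)

lemma in_Nstar_eventually_neq:
  assumes "in_Nstar \<eta>"
  shows "eventually (\<lambda>n. n \<noteq> m) \<eta>"
proof (rule ccontr)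
  assume "\<not> eventually (\<lambda>n. n \<noteq> m) \<eta>"
  with assms have eq: "eventually (\<lambda>n. n = m) \<eta>" and nontriv: "\<eta> \<noteq> bot"
    unfolding in_Nstar_def nat_ultrafilter_def by auto
  have "eventually P \<eta> \<longleftrightarrow> P m" for P
  proof
    assume "eventually P \<eta>"
    with eq have "eventually (\<lambda>_. P m) \<eta>"
      by eventually_elim simp
    with nontriv show "P m"
      by (simp add: eventually_const_iff)
  qed (use eq in \<open>auto elim: eventually_mono\<close>)
  then have "\<eta> = principal {m}"
    by (simp add: filter_eq_iff eventually_principal)
  with assms show False
    unfolding in_Nstar_def by simp
qed

lemma in_Nstar_eventually_ge:
  assumes "in_Nstar \<eta>"
  shows "eventually (\<lambda>n. m \<le> n) \<eta>"
proof -
  have "eventually (\<lambda>n. \<forall>k\<in>{..<m}. n \<noteq> k) \<eta>"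
    using in_Nstar_eventually_neq[OF assms] by (simp add: eventually_ball_finite)
  then show ?thesis
    by eventually_elim (auto simp flip: not_less)
qed

lemma omega_filter_neq_bot:
  assumes "\<omega> \<in> Omega_star"
  shows "omega_filter \<omega> \<noteq> bot"
  using assms unfolding Omega_star_def in_Nstar_def nat_ultrafilter_def omega_filter_def
  by (auto simp: filtermap_bot_iff)

lemma eventually_ge_omega_filter:
  assumes "\<omega> \<in> Omega_star"
  shows "eventually (\<lambda>x. B \<le> x) (omega_filter \<omega>)"
proof -
  obtain \<eta> u where \<omega>: "\<omega> = (\<eta>, u)" "in_Nstar \<eta>" "0 \<le> u"
    using assms unfolding Omega_star_def by auto
  have "eventually (\<lambda>n. nat \<lceil>B\<rceil> \<le> n) \<eta>"
    using \<omega>(2) by (rule in_Nstar_eventually_ge)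
  then have "eventually (\<lambda>n. B \<le> u + real n) \<eta>"
    by eventually_elim (use \<omega>(3) real_nat_ceiling_ge[of B] in \<open>linarith\<close>)
  then show ?thesis
    unfolding omega_filter_def \<omega> by (simp add: eventually_filtermap)
qed

lemma filterlim_omega_filter_shift:
  assumes "\<omega> \<in> Omega_star"
  shows "filterlim (\<lambda>x. x - M) (omega_filter (tau (- M) \<omega>)) (omega_filter \<omega>)"
proof -
  obtain \<eta> u where \<omega>: "\<omega> = (\<eta>, u)" "in_Nstar \<eta>"
    using assms unfolding Omega_star_def by auto
  define k where "k = \<lfloor>u - M\<rfloor>"
  define shift where "shift n = u - M - of_int k + real (nat (int n + k))" for n
  have shifted: "omega_filter (tau (- M) \<omega>) = filtermap shift \<eta>"
    unfolding omega_filter_def tau_def tau_pow_def \<omega> k_def shift_def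
    by (simp add: filtermap_filtermap)
  have "eventually (\<lambda>n. shift n = u + real n - M) \<eta>"
    using in_Nstar_eventually_ge[OF \<omega>(2), of "nat (- k)"]
    by eventually_elim (simp add: shift_def)
  moreover have "filterlim shift (filtermap shift \<eta>) \<eta>"
    by (simp add: filterlim_def)
  ultimately have "filterlim (\<lambda>n. u + real n - M) (omega_filter (tau (- M) \<omega>)) \<eta>"
    unfolding shifted by (rule filterlim_cong[OF refl refl, THEN iffD1])
  then show ?thesis
    unfolding \<omega> omega_filter_def filterlim_filtermap by simp
qed

lemma is_f_omega_plus_tendsto_shifted:
  assumes "\<omega> \<in> Omega_star" and "is_f_omega_plus f (tau (- M) \<omega>) h" and "L1_plus \<psi>"
  shows "((\<lambda>x. LINT t:{0..}|lborel. f (t + (x - M)) * \<psi> t) \<longlongrightarrow> (LINT t:{0..}|lborel. h t * \<psi> t))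
           (omega_filter \<omega>)"
  using assms(2,3) filterlim_compose[OF _ filterlim_omega_filter_shift[OF assms(1)]]
  unfolding is_f_omega_plus_def by blast

lemma tendsto_by_approximation:
  fixes a :: "'b \<Rightarrow> 'a::metric_space"
  assumes "G \<noteq> bot" and "(\<delta> \<longlongrightarrow> 0) G"
    and "\<forall>\<^sub>F M in G. (\<forall>\<^sub>F x in F. dist (a x) (a' M x) \<le> \<delta> M) \<and> dist b (b' M) \<le> \<delta> M
                     \<and> (a' M \<longlongrightarrow> b' M) F"
  shows "(a \<longlongrightarrow> b) F"
proof (rule tendstoI)
  fix e :: real
  assume "0 < e"
  then have "\<forall>\<^sub>F M in G. \<delta> M < e / 3"
    by (intro order_tendstoD(2)[OF assms(2)]) simp
  with assms(3) have "\<forall>\<^sub>F M in G. \<delta> M < e / 3 \<and> (\<forall>\<^sub>F x in F. dist (a x) (a' M x) \<le> \<delta> M)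
                          \<and> dist b (b' M) \<le> \<delta> M \<and> (a' M \<longlongrightarrow> b' M) F"
    by eventually_elim blast
  then obtain M where M: "\<delta> M < e / 3" "\<forall>\<^sub>F x in F. dist (a x) (a' M x) \<le> \<delta> M"
      "dist b (b' M) \<le> \<delta> M" "(a' M \<longlongrightarrow> b' M) F"
    using eventually_happens'[OF assms(1)] by blast
  have "\<forall>\<^sub>F x in F. dist (a' M x) (b' M) < e / 3"
    by (intro tendstoD[OF M(4)]) (use \<open>0 < e\<close> in simp)
  with M(2) show "\<forall>\<^sub>F x in F. dist (a x) b < e"
  proof eventually_elim
    case (elim x)
    have "dist (a x) b \<le> dist (a x) (a' M x) + dist (a' M x) (b' M) + dist b (b' M)"
      using dist_triangle[of "a x" b "a' M x"] dist_triangle[of "a' M x" b "b' M"] dist_commute[of b "b' M"]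
      by linarith
    with elim M(1,3) show ?case
      by linarith
  qed
qed

lemma set_lebesgue_integral_cong_AE':
  fixes f g :: "'a \<Rightarrow> 'b::{banach, second_countable_topology}"
  assumes "set_borel_measurable M A f" "set_borel_measurable M A g"
    and "AE x in M. x \<in> A \<longrightarrow> f x = g x"
  shows "(LINT x:A|M. f x) = (LINT x:A|M. g x)"
  unfolding set_lebesgue_integral_def
  using assms unfolding set_borel_measurable_def
  by (intro integral_cong_AE) (auto elim: eventually_mono simp: indicator_def)

lemma set_borel_measurable_mult:
  fixes f g :: "'a \<Rightarrow> 'b::{real_normed_algebra, second_countable_topology}"
  assumes "set_borel_measurable M A f" "set_borel_measurable M A g"
  shows "set_borel_measurable M A (\<lambda>x. f x * g x)"
proof -
  have "(\<lambda>x. (indicator A x *\<^sub>R f x) * (indicator A x *\<^sub>R g x)) \<in> borel_measurable M"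
    using assms unfolding set_borel_measurable_def by measurable
  also have "(\<lambda>x. (indicator A x *\<^sub>R f x) * (indicator A x *\<^sub>R g x)) = (\<lambda>x. indicator A x *\<^sub>R (f x * g x))"
    by (simp add: fun_eq_iff indicator_def)
  finally show ?thesis
    unfolding set_borel_measurable_def .
qed

lemma set_integral_reflect:
  fixes f :: "real \<Rightarrow> 'a::{banach, second_countable_topology}"
  shows "(LINT s:A|lborel. f s) = (LINT t:{t. c - t \<in> A}|lborel. f (c - t))"
  unfolding set_lebesgue_integral_def
  using lborel_integral_real_affine[where c="-1" and t=c and f="\<lambda>s. indicator A s *\<^sub>R f s"]
  by (simp add: indicator_def)

lemma set_integral_reflect_atLeastAtMost:
  fixes f :: "real \<Rightarrow> 'a::{banach, second_countable_topology}"
  shows "(LINT s:{a..b}|lborel. f s) = (LINT t:{c - b..c - a}|lborel. f (c - t))"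
proof -
  have "{t. c - t \<in> {a..b}} = {c - b..c - a}"
    by auto
  then show ?thesis
    using set_integral_reflect[of "{a..b}" f c] by simp
qed

lemma set_integrable_reflect:
  fixes f :: "real \<Rightarrow> 'a::{banach, second_countable_topology}"
  assumes "set_integrable lborel A f"
  shows "set_integrable lborel {t. c - t \<in> A} (\<lambda>t. f (c - t))"
  using lborel_integrable_real_affine[of "\<lambda>s. indicator A s *\<^sub>R f s" "-1" c] assms
  unfolding set_integrable_def by (simp add: indicator_def)

lemma set_integrable_reflect_atLeastAtMost:
  fixes f :: "real \<Rightarrow> 'a::{banach, second_countable_topology}"
  assumes "set_integrable lborel {a..b} f"
  shows "set_integrable lborel {c - b..c - a} (\<lambda>t. f (c - t))"
proof -
  have "{t. c - t \<in> {a..b}} = {c - b..c - a}"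
    by auto
  with set_integrable_reflect[OF assms, of c] show ?thesis
    by simp
qed

lemma set_borel_measurable_reflect:
  fixes f :: "real \<Rightarrow> 'a::{banach, second_countable_topology}"
  assumes "set_borel_measurable lborel A f"
  shows "set_borel_measurable lborel {t. c - t \<in> A} (\<lambda>t. f (c - t))"
proof -
  have "(\<lambda>s. indicator A s *\<^sub>R f s) \<in> borel_measurable borel"
    using assms unfolding set_borel_measurable_def by simp
  then have "(\<lambda>t. indicator A (c - t) *\<^sub>R f (c - t)) \<in> borel_measurable borel"
    by (rule measurable_compose[rotated]) simp
  then show ?thesis
    unfolding set_borel_measurable_def by (simp add: indicator_def)
qed

lemma AE_norm_bound_reflect:
  fixes f :: "real \<Rightarrow> 'a::{banach, second_countable_topology}"
  assumes "set_borel_measurable lborel A f" and "0 \<le> C"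
    and "AE s in lborel. s \<in> A \<longrightarrow> norm (f s) \<le> C"
  shows "AE t in lborel. c - t \<in> A \<longrightarrow> norm (f (c - t)) \<le> C"
proof -
  have [measurable]: "(\<lambda>s. indicator A s *\<^sub>R f s) \<in> borel_measurable borel"
    using assms(1) unfolding set_borel_measurable_def by simp
  have pred: "Measurable.pred borel (\<lambda>s. norm (indicator A s *\<^sub>R f s) \<le> C)"
    by measurable
  have "AE s in lborel. norm (indicator A s *\<^sub>R f s) \<le> C"
    using assms(3) by eventually_elim (use assms(2) in \<open>simp add: indicator_def\<close>)
  then have "AE t in lborel. norm (indicator A (c + -1 * t) *\<^sub>R f (c + -1 * t)) \<le> C"
    by (intro AE_borel_affine[OF _ pred]) simp_all
  then show ?thesis
    by eventually_elim (auto simp: indicator_def)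
qed

lemma set_integrable_bounded_mult:
  fixes k \<phi> :: "real \<Rightarrow> 'a::{real_normed_field, banach, second_countable_topology}"
  assumes "set_integrable lborel B \<phi>" "set_borel_measurable lborel A k"
    and "AE s in lborel. s \<in> A \<longrightarrow> norm (k s) \<le> C" "A \<in> sets lborel" "A \<subseteq> B"
  shows "set_integrable lborel A (\<lambda>s. k s * \<phi> s)"
proof (rule set_integrable_bound)
  have "set_integrable lborel A \<phi>"
    using assms(1,4,5) by (rule set_integrable_subset)
  then show "set_integrable lborel A (\<lambda>s. of_real C * \<phi> s)"
    by blast
  from \<open>set_integrable lborel A \<phi>\<close> have "set_borel_measurable lborel A \<phi>"
    unfolding set_integrable_def set_borel_measurable_def by (rule borel_measurable_integrable)
  with assms(2) show "set_borel_measurable lborel A (\<lambda>s. k s * \<phi> s)"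
    by (rule set_borel_measurable_mult)
  show "AE s in lborel. s \<in> A \<longrightarrow> norm (k s * \<phi> s) \<le> norm (of_real C * \<phi> s)"
    using assms(3) by eventually_elim (auto simp: norm_mult intro: mult_right_mono order_trans[OF _ abs_ge_self])
qed

lemma tendsto_set_integral_norm_tail:
  fixes \<phi> :: "real \<Rightarrow> 'a::{banach, second_countable_topology}"
  assumes "set_integrable lborel B \<phi>"
  shows "((\<lambda>T. LINT s:B \<inter> {T<..}|lborel. norm (\<phi> s)) \<longlongrightarrow> 0) at_top"
proof -
  have [measurable]: "(\<lambda>s. indicator B s *\<^sub>R \<phi> s) \<in> borel_measurable borel"
    using assms unfolding set_integrable_def by (simp add: borel_measurable_integrable)
  have "((\<lambda>T. \<integral>s. indicator {T<..} s * norm (indicator B s *\<^sub>R \<phi> s) \<partial>lborel) \<longlongrightarrow> (\<integral>s. 0 \<partial>(lborel :: real measure)))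
          at_top"
  proof (rule integral_dominated_convergence_at_top)
    show "integrable lborel (\<lambda>s. norm (indicator B s *\<^sub>R \<phi> s))"
      using assms unfolding set_integrable_def by (rule integrable_norm)
    show "AE s in lborel. ((\<lambda>T. indicator {T<..} s * norm (indicator B s *\<^sub>R \<phi> s)) \<longlongrightarrow> 0) at_top"
    proof (rule AE_I2)
      fix s :: real
      show "((\<lambda>T. indicator {T<..} s * norm (indicator B s *\<^sub>R \<phi> s)) \<longlongrightarrow> 0) at_top"
        by (intro tendsto_eventually eventually_mono[OF eventually_ge_at_top[of s]]) simp
    qed
    show "\<forall>\<^sub>F T in at_top. AE s in lborel.
            norm (indicator {T<..} s * norm (indicator B s *\<^sub>R \<phi> s)) \<le> norm (indicator B s *\<^sub>R \<phi> s)"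
      by (intro always_eventually allI AE_I2) (simp add: indicator_def)
    show "(\<lambda>s. indicator {T<..} s * norm (indicator B s *\<^sub>R \<phi> s)) \<in> borel_measurable lborel" for T
      by measurable
  qed simp
  moreover have "(\<lambda>s. indicator {T<..} s * norm (indicator B s *\<^sub>R \<phi> s))
      = (\<lambda>s. indicator (B \<inter> {T<..}) s *\<^sub>R norm (\<phi> s))" for T
    by (auto simp: fun_eq_iff indicator_def)
  ultimately show ?thesis
    unfolding set_lebesgue_integral_def by simp
qed

lemma norm_set_integral_le_tail:
  fixes k \<phi> :: "real \<Rightarrow> 'a::{real_normed_field, banach, second_countable_topology}"
  assumes \<phi>: "set_integrable lborel B \<phi>" and k: "set_borel_measurable lborel A k"
    and bound: "AE s in lborel. s \<in> A \<longrightarrow> norm (k s) \<le> C" and "0 \<le> C"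
    and A: "A \<in> sets lborel" "A \<subseteq> B \<inter> {T<..}"
  shows "norm (LINT s:A|lborel. k s * \<phi> s) \<le> C * (LINT s:B \<inter> {T<..}|lborel. norm (\<phi> s))"
proof -
  have \<phi>A: "set_integrable lborel A \<phi>"
    using \<phi> A by (auto intro: set_integrable_subset)
  have "integrable lborel (\<lambda>s. C * norm (indicator B s *\<^sub>R \<phi> s))"
    using \<phi> unfolding set_integrable_def by (intro integrable_mult_right integrable_norm)
  then have "integrable lborel (\<lambda>s. indicator {T<..} s *\<^sub>R (C * norm (indicator B s *\<^sub>R \<phi> s)))"
    by (rule integrable_mult_indicator[rotated]) simp
  moreover have "(\<lambda>s. indicator {T<..} s *\<^sub>R (C * norm (indicator B s *\<^sub>R \<phi> s)))
      = (\<lambda>s. indicator (B \<inter> {T<..}) s *\<^sub>R (C * norm (\<phi> s)))"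
    by (auto simp: fun_eq_iff indicator_def)
  ultimately have tail_integrable: "set_integrable lborel (B \<inter> {T<..}) (\<lambda>s. C * norm (\<phi> s))"
    unfolding set_integrable_def by simp
  have k\<phi>: "set_integrable lborel A (\<lambda>s. k s * \<phi> s)"
    using set_integrable_bounded_mult[OF \<phi> k bound] A by auto
  have "norm (LINT s:A|lborel. k s * \<phi> s) \<le> (LINT s:A|lborel. norm (k s * \<phi> s))"
    using k\<phi> by (rule set_integral_norm_bound)
  also have "\<dots> \<le> (LINT s:A|lborel. C * norm (\<phi> s))"
  proof (rule set_integral_mono_AE[OF set_integrable_norm[OF k\<phi>]])
    show "set_integrable lborel A (\<lambda>s. C * norm (\<phi> s))"
      using \<phi>A by (intro set_integrable_mult_right set_integrable_norm)
    show "AE s\<in>A in lborel. norm (k s * \<phi> s) \<le> C * norm (\<phi> s)"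
      using bound by eventually_elim (auto simp: norm_mult intro: mult_right_mono)
  qed
  also have "\<dots> \<le> (LINT s:B \<inter> {T<..}|lborel. C * norm (\<phi> s))"
    using tail_integrable set_integrable_mult_right[OF set_integrable_norm[OF \<phi>A], of C] A \<open>0 \<le> C\<close>
    unfolding set_lebesgue_integral_def set_integrable_def
    by (intro integral_mono) (auto simp: indicator_def)
  finally show ?thesis
    by simp
qed

lemma norm_set_integral_truncation_le:
  fixes k \<phi> :: "real \<Rightarrow> 'a::{real_normed_field, banach, second_countable_topology}"
  assumes \<phi>: "set_integrable lborel B \<phi>" and k: "set_borel_measurable lborel A k"
    and bound: "AE s in lborel. s \<in> A \<longrightarrow> norm (k s) \<le> C" and "0 \<le> C"
    and A: "A \<in> sets lborel" "A \<subseteq> B"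
  shows "norm ((LINT s:A|lborel. k s * \<phi> s) - (LINT s:A \<inter> {..T}|lborel. k s * \<phi> s))
           \<le> C * (LINT s:B \<inter> {T<..}|lborel. norm (\<phi> s))"
proof -
  have "set_integrable lborel A (\<lambda>s. k s * \<phi> s)"
    using set_integrable_bounded_mult[OF \<phi> k bound A] .
  then have "(LINT s:A \<inter> {..T} \<union> A \<inter> {T<..}|lborel. k s * \<phi> s)
      = (LINT s:A \<inter> {..T}|lborel. k s * \<phi> s) + (LINT s:A \<inter> {T<..}|lborel. k s * \<phi> s)"
    using A by (intro set_integral_Un) (auto intro: set_integrable_subset)
  moreover have "A \<inter> {..T} \<union> A \<inter> {T<..} = A"
    by auto
  ultimately have "(LINT s:A|lborel. k s * \<phi> s)
      = (LINT s:A \<inter> {..T}|lborel. k s * \<phi> s) + (LINT s:A \<inter> {T<..}|lborel. k s * \<phi> s)"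
    by simp
  moreover have "norm (LINT s:A \<inter> {T<..}|lborel. k s * \<phi> s) \<le> C * (LINT s:B \<inter> {T<..}|lborel. norm (\<phi> s))"
    using A bound \<open>0 \<le> C\<close>
    by (intro norm_set_integral_le_tail[OF \<phi>] set_borel_measurable_subset[OF k]) (auto elim: eventually_mono)
  ultimately show ?thesis
    by simp
qed

lemma dist_convolution_truncation_le:
  fixes f \<phi> :: "real \<Rightarrow> complex"
  assumes \<phi>: "set_integrable lborel {0..} \<phi>" and f: "set_borel_measurable lborel {0..} f"
    and bound: "AE t in lborel. t \<in> {0..} \<longrightarrow> norm (f t) \<le> C" and "0 \<le> C" and "M \<le> x"
  shows "dist (LINT s:{0..x}|lborel. f (x - s) * \<phi> s) (LINT s:{0..M}|lborel. f (x - s) * \<phi> s)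
           \<le> C * (LINT s:{0..} \<inter> {M<..}|lborel. norm (\<phi> s))"
proof -
  have "set_borel_measurable lborel {t. x - t \<in> {0..}} (\<lambda>s. f (x - s))"
    using f by (rule set_borel_measurable_reflect)
  then have k: "set_borel_measurable lborel {0..x} (\<lambda>s. f (x - s))"
    by (rule set_borel_measurable_subset) auto
  have "AE s in lborel. s \<in> {0..x} \<longrightarrow> norm (f (x - s)) \<le> C"
    using AE_norm_bound_reflect[OF f \<open>0 \<le> C\<close> bound, of x] by eventually_elim auto
  then have "norm ((LINT s:{0..x}|lborel. f (x - s) * \<phi> s) - (LINT s:{0..x} \<inter> {..M}|lborel. f (x - s) * \<phi> s))
      \<le> C * (LINT s:{0..} \<inter> {M<..}|lborel. norm (\<phi> s))"
    by (rule norm_set_integral_truncation_le[OF \<phi> k _ \<open>0 \<le> C\<close>]) auto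
  moreover have "{0..x} \<inter> {..M} = {0..M}"
    using \<open>M \<le> x\<close> by auto
  ultimately show ?thesis
    by (simp only: dist_norm)
qed

lemma dist_reflected_truncation_le:
  fixes g \<phi> :: "real \<Rightarrow> complex"
  assumes \<phi>: "set_integrable lborel {0..} \<phi>" and g: "g \<in> borel_measurable lborel"
    and bound: "AE t in lborel. norm (g t) \<le> C" and "0 \<le> C"
  shows "dist (LINT s:{0..}|lborel. g (- s) * \<phi> s) (LINT s:{0..M}|lborel. g (- s) * \<phi> s)
           \<le> C * (LINT s:{0..} \<inter> {M<..}|lborel. norm (\<phi> s))"
proof -
  have [measurable]: "g \<in> borel_measurable borel"
    using g by simp
  have k: "set_borel_measurable lborel {0..} (\<lambda>s. g (- s))"
    unfolding set_borel_measurable_def by measurable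
  have "AE s in lborel. norm (g (0 + -1 * s)) \<le> C"
    by (rule AE_borel_affine[OF _ _ bound]) (simp, measurable)
  then have "AE s in lborel. s \<in> {0..} \<longrightarrow> norm (g (- s)) \<le> C"
    by eventually_elim simp
  then have "norm ((LINT s:{0..}|lborel. g (- s) * \<phi> s) - (LINT s:{0..} \<inter> {..M}|lborel. g (- s) * \<phi> s))
      \<le> C * (LINT s:{0..} \<inter> {M<..}|lborel. norm (\<phi> s))"
    by (rule norm_set_integral_truncation_le[OF \<phi> k _ \<open>0 \<le> C\<close>]) auto
  moreover have "{0..} \<inter> {..M} = {0..M}"
    by auto
  ultimately show ?thesis
    by (simp only: dist_norm)
qed

lemma is_f_omega_reflect:
  assumes "is_f_omega f \<omega> g" and "0 < M"
  obtains h where "is_f_omega_plus f (tau (- M) \<omega>) h"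
    and "AE t in lborel. t \<in> {0..M} \<longrightarrow> g (t - M) = h t"
proof -
  obtain h where h: "is_f_omega_plus f (tau (- M) \<omega>) h"
    and gh: "AE x in lborel. x \<in> {- M..0} \<longrightarrow> g x = h (M + x)"
    using assms unfolding is_f_omega_def by blast
  define h0 where "h0 t = indicator {0..} t *\<^sub>R h t" for t
  have [measurable]: "h0 \<in> borel_measurable borel"
    using h unfolding is_f_omega_plus_def Linf_plus_def set_borel_measurable_def h0_def by simp
  have [measurable]: "g \<in> borel_measurable borel"
    using assms(1) unfolding is_f_omega_def Linf_real_def by simp
  have pred: "Measurable.pred borel (\<lambda>x. x \<in> {- M..0} \<longrightarrow> g x = h0 (M + x))"
    by measurable
  have "AE x in lborel. x \<in> {- M..0} \<longrightarrow> g x = h0 (M + x)"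
    using gh by eventually_elim (auto simp: h0_def)
  then have "AE t in lborel. - M + 1 * t \<in> {- M..0} \<longrightarrow> g (- M + 1 * t) = h0 (M + (- M + 1 * t))"
    by (intro AE_borel_affine[OF _ pred]) simp_all
  then have "AE t in lborel. t \<in> {0..M} \<longrightarrow> g (t - M) = h t"
    by eventually_elim (auto simp: h0_def)
  with h show thesis
    by (rule that)
qed

lemma truncated_convolution_tendsto:
  fixes f g \<phi> :: "real \<Rightarrow> complex"
  assumes "\<omega> \<in> Omega_star" and "is_f_omega f \<omega> g" and "L1_plus \<phi>" and "0 < M"
  shows "((\<lambda>x. LINT s:{0..M}|lborel. f (x - s) * \<phi> s) \<longlongrightarrow> (LINT s:{0..M}|lborel. g (- s) * \<phi> s))
           (omega_filter \<omega>)"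
proof -
  obtain h where h: "is_f_omega_plus f (tau (- M) \<omega>) h"
    and gh: "AE t in lborel. t \<in> {0..M} \<longrightarrow> g (t - M) = h t"
    using is_f_omega_reflect[OF assms(2,4)] .
  have [measurable]: "g \<in> borel_measurable borel"
    using assms(2) unfolding is_f_omega_def Linf_real_def by simp
  define \<psi> where "\<psi> t = indicator {..M} t *\<^sub>R \<phi> (M - t)" for t
  have "set_integrable lborel {0..M} \<phi>"
    using assms(3) unfolding L1_plus_def by (rule set_integrable_subset) auto
  from set_integrable_reflect_atLeastAtMost[OF this, of M]
  have \<phi>_reflected: "set_integrable lborel {0..M} (\<lambda>t. \<phi> (M - t))"
    by simp
  have restrict_\<psi>: "(LINT t:{0..}|lborel. k t * \<psi> t) = (LINT t:{0..M}|lborel. k t * \<phi> (M - t))" for k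
    unfolding set_lebesgue_integral_def \<psi>_def by (intro Bochner_Integration.integral_cong) (auto simp: indicator_def)
  have "L1_plus \<psi>"
    using \<phi>_reflected unfolding L1_plus_def set_integrable_def \<psi>_def
    by (rule back_subst[where P="integrable lborel"]) (auto simp: fun_eq_iff indicator_def)
  have lhs: "(LINT s:{0..M}|lborel. f (x - s) * \<phi> s) = (LINT t:{0..}|lborel. f (t + (x - M)) * \<psi> t)" for x
    unfolding restrict_\<psi> by (subst set_integral_reflect_atLeastAtMost[where c=M]) (simp add: algebra_simps)
  have "(LINT s:{0..M}|lborel. g (- s) * \<phi> s) = (LINT t:{0..M}|lborel. g (t - M) * \<phi> (M - t))"
    by (subst set_integral_reflect_atLeastAtMost[where c=M]) simp
  also have "\<dots> = (LINT t:{0..M}|lborel. h t * \<phi> (M - t))"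
  proof (rule set_lebesgue_integral_cong_AE')
    have "set_borel_measurable lborel {0..M} (\<lambda>t. \<phi> (M - t))"
      using \<phi>_reflected unfolding set_integrable_def set_borel_measurable_def by simp
    moreover have "set_borel_measurable lborel {0..M} (\<lambda>t. g (t - M))"
      unfolding set_borel_measurable_def by measurable
    moreover have "set_borel_measurable lborel {0..} h"
      using h unfolding is_f_omega_plus_def Linf_plus_def by blast
    then have "set_borel_measurable lborel {0..M} h"
      by (rule set_borel_measurable_subset) auto
    ultimately show "set_borel_measurable lborel {0..M} (\<lambda>t. g (t - M) * \<phi> (M - t))"
      and "set_borel_measurable lborel {0..M} (\<lambda>t. h t * \<phi> (M - t))"
      by (simp_all add: set_borel_measurable_mult)
    show "AE t in lborel. t \<in> {0..M} \<longrightarrow> g (t - M) * \<phi> (M - t) = h t * \<phi> (M - t)"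
      using gh by eventually_elim simp
  qed
  finally have rhs: "(LINT s:{0..M}|lborel. g (- s) * \<phi> s) = (LINT t:{0..}|lborel. h t * \<psi> t)"
    unfolding restrict_\<psi> .
  show ?thesis
    using is_f_omega_plus_tendsto_shifted[OF assms(1) h \<open>L1_plus \<psi>\<close>] unfolding lhs rhs .
qed

lemma Linf_common_bound:
  assumes "Linf_plus f" and "is_f_omega f \<omega> g"
  obtains C where "0 \<le> C" and "AE t in lborel. t \<in> {0..} \<longrightarrow> norm (f t) \<le> C"
    and "AE t in lborel. norm (g t) \<le> C"
proof -
  obtain Cf where Cf: "AE t in lborel. t \<in> {0..} \<longrightarrow> norm (f t) \<le> Cf"
    using assms(1) unfolding Linf_plus_def by blast
  obtain Cg where Cg: "AE t in lborel. norm (g t) \<le> Cg"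
    using assms(2) unfolding is_f_omega_def Linf_real_def by blast
  show thesis
  proof (rule that[of "max 0 (max Cf Cg)"])
    show "AE t in lborel. t \<in> {0..} \<longrightarrow> norm (f t) \<le> max 0 (max Cf Cg)"
      using Cf by eventually_elim auto
    show "AE t in lborel. norm (g t) \<le> max 0 (max Cf Cg)"
      using Cg by eventually_elim auto
  qed simp
qed

lemma reflected_convolution_tendsto:
  fixes f g \<phi> :: "real \<Rightarrow> complex"
  assumes "\<omega> \<in> Omega_star" and "is_f_omega f \<omega> g" and "L1_plus \<phi>" and "Linf_plus f"
  shows "((\<lambda>x. LINT s:{0..x}|lborel. f (x - s) * \<phi> s) \<longlongrightarrow> (LINT s:{0..}|lborel. g (- s) * \<phi> s))
           (omega_filter \<omega>)"
proof -
  have \<phi>: "set_integrable lborel {0..} \<phi>"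
    using assms(3) unfolding L1_plus_def .
  have f: "set_borel_measurable lborel {0..} f"
    using assms(4) unfolding Linf_plus_def by blast
  have g: "g \<in> borel_measurable lborel"
    using assms(2) unfolding is_f_omega_def Linf_real_def by blast
  obtain C where "0 \<le> C" and f_bound: "AE t in lborel. t \<in> {0..} \<longrightarrow> norm (f t) \<le> C"
    and g_bound: "AE t in lborel. norm (g t) \<le> C"
    using Linf_common_bound[OF assms(4,2)] .
  let ?F = "omega_filter \<omega>"
  let ?truncated = "\<lambda>M x. LINT s:{0..M}|lborel. f (x - s) * \<phi> s"
  let ?limit = "\<lambda>M. LINT s:{0..M}|lborel. g (- s) * \<phi> s"
  let ?error = "\<lambda>M. C * (LINT s:{0..} \<inter> {M<..}|lborel. norm (\<phi> s))"
  show ?thesis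
  proof (rule tendsto_by_approximation[where G=at_top and \<delta>="?error" and a'="?truncated" and b'="?limit"])
    show "(?error \<longlongrightarrow> 0) at_top"
      using tendsto_mult[OF tendsto_const tendsto_set_integral_norm_tail[OF \<phi>], of C] by simp
    show "\<forall>\<^sub>F M in at_top. (\<forall>\<^sub>F x in ?F. dist (?truncated x x) (?truncated M x) \<le> ?error M)
        \<and> dist (LINT s:{0..}|lborel. g (- s) * \<phi> s) (?limit M) \<le> ?error M \<and> (?truncated M \<longlongrightarrow> ?limit M) ?F"
      using eventually_gt_at_top[of 0]
    proof eventually_elim
      case (elim M)
      have "\<forall>\<^sub>F x in ?F. dist (?truncated x x) (?truncated M x) \<le> ?error M"
        using eventually_ge_omega_filter[OF assms(1), of M]
        by eventually_elim (rule dist_convolution_truncation_le[OF \<phi> f f_bound \<open>0 \<le> C\<close>])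
      with dist_reflected_truncation_le[OF \<phi> g g_bound \<open>0 \<le> C\<close>, of M]
        truncated_convolution_tendsto[OF assms(1-3) elim]
      show ?case
        by blast
    qed
  qed simp
qed

theorem lemma3p2:
  fixes \<phi> f g :: "real \<Rightarrow> complex" and \<omega> :: omega
  assumes "L1_plus \<phi>" and "Linf_plus f" and "\<omega> \<in> Omega_star"
    and "is_f_omega f \<omega> g"
  shows "omega_lim \<omega> (\<lambda>x. LINT t:{0..x}|lborel. f t * \<phi> (x - t))
           = (LINT t:{0..}|lborel. g (- t) * \<phi> t)"
proof -
  have "(LINT t:{0..x}|lborel. f t * \<phi> (x - t)) = (LINT s:{0..x}|lborel. f (x - s) * \<phi> s)" for x
    by (subst set_integral_reflect_atLeastAtMost[where c=x]) simp
  then have "((\<lambda>x. LINT t:{0..x}|lborel. f t * \<phi> (x - t)) \<longlongrightarrow> (LINT t:{0..}|lborel. g (- t) * \<phi> t))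
      (omega_filter \<omega>)"
    using reflected_convolution_tendsto[OF assms(3,4,1,2)] by simp
  then show ?thesis
    unfolding omega_lim_def using omega_filter_neq_bot[OF assms(3)] by (intro tendsto_Lim) auto
qed

end
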